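(* Consider $n$ agents $\mathcal{V}=\{1,\dots,n\}$ with Lagrangian dynamics $M_i(q_i)\ddot q_i+C_i(q_i,\dot q_i)\dot q_i=\tau_i$, $q_i\in\mathbb{R}^m$, with $M_i(q_i)$ symmetric positive definite. Let $\mathcal{X}_1,\dots,\mathcal{X}_n\subseteq\mathbb{R}^m$ be closed convex sets with $\mathcal{X}_0=\bigcap_{i}\mathcal{X}_i$ nonempty and bounded. Let $\sigma:[t_0,\infty)\to\mathcal{P}$ be a piecewise constant switching signal taking values in a finite set $\mathcal{P}$ of undirected graphs on $\mathcal{V}$, with switching times $t_0<t_1<\dots$ satisfying $\inf_l(t_{l+1}-t_l)\ge\tau_d>0$; let $\mathcal{N}_i(\sigma(t))$ be the neighbor set of $i$ in $\mathcal{G}_{\sigma(t)}=(\mathcal{V},\mathcal{E}_{\sigma(t)})$. Let $a_{ij}(t)=a_{ji}(t)$ be continuous weights with $a_*\le a_{ij}(t)\le a^*$ for all $i,j$, $t\ge0$, for constants $a_*,a^*>0$. Apply the control $$\tau_i=C_i(q_i,\dot q_i)\dot q_i-kM_i(q_i)\dot q_i-M_i(q_i)(q_i-P_{\mathcal{X}_i}(q_i))-M_i(q_i)\sum_{j\in\mathcal{N}_i(\sigma(t))}a_{ij}(t)(q_i-q_j).$$ Suppose the graph is uniformly jointly connected: there is $T>0$ such that for every $t\ge t_0$ the union graph $(\mathcal{V},\bigcup_{s\in[t,t+T)}\mathcal{E}_{\sigma(s)})$ is connected. Then for all sufficiently large $k>0$, every solution satisfies $\lim_{t\to\infty}\|q_i(t)\|_{\mathcal{X}_0}=0$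 for all $i$, $\lim_{t\to\infty}(q_i(t)-q_j(t))=0$ for all $i,j$, and $\lim_{t\to\infty}\dot q_i(t)=0$ for all $i$.
   Context: $\|\cdot\|$ is the Euclidean norm, $\|x\|_{\mathcal{S}}=\inf_{y\in\mathcal{S}}\|x-y\|$, and $P_{\mathcal{S}}(x)$ is the Euclidean projection of $x$ onto a closed convex set $\mathcal{S}$. *)

theory Defs
  imports "HOL-Analysis.Analysis"
begin

definition undirected_graph_on :: "nat set \<Rightarrow> (nat \<times> nat) set \<Rightarrow> bool" where
  "undirected_graph_on V E \<longleftrightarrow> E \<subseteq> V \<times> V \<and> sym E \<and> irrefl E"

definition graph_connected :: "nat set \<Rightarrow> (nat \<times> nat) set \<Rightarrow> bool" where
  "graph_connected V E \<longleftrightarrow> (\<forall>i\<in>V. \<forall>j\<in>V. (i, j) \<in> (E \<inter> (V \<times> V))\<^sup>*)"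

definition neighbors :: "(nat \<times> nat) set \<Rightarrow> nat \<Rightarrow> nat set" where
  "neighbors E i = {j. (i, j) \<in> E}"

definition spd :: "real^'m^'m \<Rightarrow> bool" where
  "spd A \<longleftrightarrow> transpose A = A \<and> (\<forall>v. v \<noteq> 0 \<longrightarrow> v \<bullet> (A *v v) > 0)"

end

theory Submission
  imports Defs
begin

text \<open>The computed-torque feedback cancels \<open>M\<close> and \<open>C\<close>, so every agent is a damped double
  integrator \<open>q'' = - k q' - (q - P(q)) - \<Sum>\<^sub>j a\<^sub>i\<^sub>j (q\<^sub>i - q\<^sub>j)\<close>. Fix \<open>x0\<close> in the common set.
  For large \<open>k\<close> the energy \<open>\<Sum>\<^sub>i |q'\<^sub>i|\<^sup>2 + 2 q'\<^sub>i \<bullet> (q\<^sub>i - x0) + k |q\<^sub>i - x0|\<^sup>2\<close> decreases at least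
  at the rate \<open>W\<close> collecting the squared velocities, the squared projection residuals and the
  squared disagreements along active edges: the residuals are handled by the obtuse-angle
  property of projections, the coupling by the Laplacian identity. So the energy converges,
  positions, velocities and accelerations stay bounded, and \<open>W\<close> is small somewhere in every
  time window. Velocities and residuals being uniformly Lipschitz, they tend to zero
  (Barbalat's argument). An edge active at some time stays active on a dwell interval, where
  \<open>W\<close> is small somewhere; as positions eventually move slowly, the disagreement along every
  edge of the union graph over \<open>[t, t + T)\<close> is small, and joint connectivity gives consensus.
  Finally near-consensus and small residuals force the bounded trajectories close to the common
  set, by compactness.\<close>

lemma DERIV_nonpos_imp_decreasing_finite_exceptions:
  fixes f :: "real \<Rightarrow> real"
  assumes "finite S" "a \<le> b" "continuous_on {a..b} f"
    and "\<And>x. a < x \<Longrightarrow> x < b \<Longrightarrow> x \<notin> S \<Longrightarrow> \<exists>y. (f has_real_derivative y) (at x) \<and> y \<le> 0"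
  shows "f b \<le> f a"
  using assms(2-4)
proof (induction "card (S \<inter> {a<..<b})" arbitrary: a b rule: less_induct)
  case less
  show ?case
  proof (cases "S \<inter> {a<..<b} = {}")
    case True
    show ?thesis
    proof (rule DERIV_nonpos_imp_decreasing_open[OF less.prems(1) _ less.prems(2)])
      fix x assume x: "a < x" "x < b"
      then have "x \<notin> S" using True by auto
      then show "\<exists>y. (f has_real_derivative y) (at x) \<and> y \<le> 0" using less.prems(3) x by simp
    qed
  next
    case False
    then obtain c where c: "c \<in> S" "a < c" "c < b" by auto
    have fin: "finite (S \<inter> {a<..<b})" using assms(1) by auto
    have fewer: "card (S \<inter> {a<..<c}) < card (S \<inter> {a<..<b})"
      "card (S \<inter> {c<..<b}) < card (S \<inter> {a<..<b})"
      by (rule psubset_card_mono[OF fin], use c in auto)+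
    have "f c \<le> f a"
    proof (rule less.hyps[OF fewer(1)])
      show "a \<le> c" using c by simp
      show "continuous_on {a..c} f" by (rule continuous_on_subset[OF less.prems(2)]) (use c in auto)
      fix x assume "a < x" "x < c" "x \<notin> S"
      then show "\<exists>y. (f has_real_derivative y) (at x) \<and> y \<le> 0" by (intro less.prems(3)) (use c in auto)
    qed
    moreover have "f b \<le> f c"
    proof (rule less.hyps[OF fewer(2)])
      show "c \<le> b" using c by simp
      show "continuous_on {c..b} f" by (rule continuous_on_subset[OF less.prems(2)]) (use c in auto)
      fix x assume "c < x" "x < b" "x \<notin> S"
      then show "\<exists>y. (f has_real_derivative y) (at x) \<and> y \<le> 0" by (intro less.prems(3)) (use c in auto)
    qed
    ultimately show ?thesis by simp
  qed
qed

lemma vector_derivative_bound_finite_exceptions: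
  fixes g :: "real \<Rightarrow> 'a::real_inner"
  assumes "finite S" "a \<le> b" "continuous_on {a..b} g" "0 \<le> B"
    and "\<And>x. a < x \<Longrightarrow> x < b \<Longrightarrow> x \<notin> S \<Longrightarrow> \<exists>g'. (g has_vector_derivative g') (at x) \<and> norm g' \<le> B"
  shows "norm (g b - g a) \<le> B * (b - a)"
proof -
  define u where "u = g b - g a"
  define f where "f x = inner (g x) u - B * norm u * x" for x
  have "f b \<le> f a"
  proof (rule DERIV_nonpos_imp_decreasing_finite_exceptions[OF assms(1,2)])
    show "continuous_on {a..b} f"
      unfolding f_def by (intro continuous_intros assms(3))
    fix x assume "a < x" "x < b" "x \<notin> S"
    then obtain g' where g': "(g has_vector_derivative g') (at x)" "norm g' \<le> B"
      using assms(5) by blast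
    have "((\<lambda>x. inner (g x) u) has_real_derivative inner g' u) (at x)"
      using bounded_bilinear.has_vector_derivative[OF bounded_bilinear_inner g'(1)
          has_vector_derivative_const[of u]]
      by (simp add: has_real_derivative_iff_has_vector_derivative)
    then have "(f has_real_derivative inner g' u - B * norm u) (at x)"
      unfolding f_def by (auto intro!: derivative_eq_intros)
    moreover have "inner g' u \<le> B * norm u"
      using norm_cauchy_schwarz[of g' u] mult_right_mono[OF g'(2) norm_ge_zero[of u]] by linarith
    ultimately show "\<exists>y. (f has_real_derivative y) (at x) \<and> y \<le> 0" by auto
  qed
  then have "inner u u \<le> B * norm u * (b - a)"
    by (simp add: f_def u_def algebra_simps)
  then have "norm u * norm u \<le> norm u * (B * (b - a))"
    by (simp add: power2_norm_eq_inner[symmetric] power2_eq_square algebra_simps)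
  then show ?thesis
    using assms(2,4) by (cases "u = 0") (auto simp: u_def mult_le_cancel_left_pos)
qed

lemma tendsto_zero_if_lipschitz_and_frequently_small:
  fixes f :: "real \<Rightarrow> real"
  assumes lipschitz: "\<And>s s'. t1 \<le> s \<Longrightarrow> s \<le> s' \<Longrightarrow> \<bar>f s' - f s\<bar> \<le> L * (s' - s)"
    and "L > 0"
    and small: "\<And>\<epsilon> h. \<epsilon> > 0 \<Longrightarrow> h > 0 \<Longrightarrow>
                  \<exists>T0. \<forall>s\<ge>T0. \<exists>\<tau>. s < \<tau> \<and> \<tau> < s + h \<and> \<bar>f \<tau>\<bar> < \<epsilon>"
  shows "(f \<longlongrightarrow> 0) at_top"
proof (rule tendstoI)
  fix \<epsilon> :: real assume "\<epsilon> > 0"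
  then obtain T0 where T0: "\<And>s. s \<ge> T0 \<Longrightarrow> \<exists>\<tau>. s < \<tau> \<and> \<tau> < s + \<epsilon> / (2 * L) \<and> \<bar>f \<tau>\<bar> < \<epsilon> / 2"
    using small[of "\<epsilon> / 2" "\<epsilon> / (2 * L)"] \<open>L > 0\<close> by auto
  have "\<bar>f t\<bar> < \<epsilon>" if t: "t \<ge> max T0 t1" for t
  proof -
    obtain \<tau> where \<tau>: "t < \<tau>" "\<tau> < t + \<epsilon> / (2 * L)" "\<bar>f \<tau>\<bar> < \<epsilon> / 2"
      using T0 t by auto
    have "\<bar>f \<tau> - f t\<bar> \<le> L * (\<tau> - t)"
      using lipschitz[of t \<tau>] \<tau>(1) t by simp
    also have "\<dots> \<le> L * (\<epsilon> / (2 * L))"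
      using \<tau>(2) \<open>L > 0\<close> by (intro mult_left_mono) auto
    also have "\<dots> = \<epsilon> / 2" using \<open>L > 0\<close> by simp
    finally show ?thesis using \<tau>(3) by arith
  qed
  then show "\<forall>\<^sub>F t in at_top. dist (f t) 0 < \<epsilon>"
    unfolding eventually_at_top_linorder by (auto intro: exI[of _ "max T0 t1"])
qed

lemma norm_diff_le_rtrancl:
  fixes f :: "'a \<Rightarrow> 'b::real_normed_vector"
  assumes "finite R" "0 \<le> \<delta>" "\<And>u v. (u, v) \<in> R \<Longrightarrow> norm (f u - f v) \<le> \<delta>"
    and "(i, j) \<in> R\<^sup>*"
  shows "norm (f i - f j) \<le> real (card R) * \<delta>"
proof -
  have "norm (f i - f j) \<le> real m * \<delta>" if "(i, j) \<in> R ^^ m" for m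
    using that
  proof (induction m arbitrary: j)
    case (Suc m)
    then obtain w where "(i, w) \<in> R ^^ m" "(w, j) \<in> R" by auto
    then have "norm (f i - f w) + norm (f w - f j) \<le> real m * \<delta> + \<delta>"
      using Suc.IH assms(3) by (meson add_mono)
    then show ?case
      using norm_triangle_ineq[of "f i - f w" "f w - f j"] by (simp add: algebra_simps)
  qed simp
  moreover obtain m where "m \<le> card R" "(i, j) \<in> R ^^ m"
    using assms(4) rtrancl_finite_eq_relpow[OF assms(1)] by blast
  ultimately show ?thesis
    using assms(2) by (meson mult_right_mono of_nat_le_iff order_trans)
qed

lemma sum_neighbors_eq_sum_edges:
  assumes "E \<subseteq> V \<times> V" "finite V"
  shows "(\<Sum>i\<in>V. \<Sum>j\<in>neighbors E i. h i j) = (\<Sum>(i, j)\<in>E. h i j)"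
proof -
  have "Sigma V (neighbors E) = E" using assms(1) by (auto simp: neighbors_def)
  moreover have "finite (neighbors E i)" for i
    using assms by (auto simp: neighbors_def intro: finite_subset[of _ V])
  ultimately show ?thesis using assms(2) by (simp add: sum.Sigma)
qed

lemma laplacian_quadratic_form:
  fixes x :: "nat \<Rightarrow> 'a::real_inner"
  assumes "E \<subseteq> V \<times> V" "finite V" "sym E" "\<And>i j. w i j = w j i"
  shows "2 * (\<Sum>i\<in>V. \<Sum>j\<in>neighbors E i. w i j * inner (x i - c) (x i - x j))
       = (\<Sum>(i, j)\<in>E. w i j * (norm (x i - x j))\<^sup>2)"
proof -
  define h where "h i j = w i j * inner (x i - c) (x i - x j)" for i j
  have "bij_betw prod.swap E E"
    by (rule bij_betwI[where g=prod.swap]) (use assms(3) in \<open>auto simp: sym_def\<close>)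
  then have "(\<Sum>(i, j)\<in>E. h i j) = (\<Sum>(i, j)\<in>E. h j i)"
    using sum.reindex_bij_betw[of prod.swap E E "\<lambda>(i, j). h i j"] by (simp add: case_prod_beta)
  then have "2 * (\<Sum>(i, j)\<in>E. h i j) = (\<Sum>(i, j)\<in>E. h i j) + (\<Sum>(i, j)\<in>E. h j i)"
    by (simp only: mult_2)
  also have "\<dots> = (\<Sum>(i, j)\<in>E. h i j + h j i)"
    by (simp only: sum.distrib[symmetric] split_def)
  also have "\<dots> = (\<Sum>(i, j)\<in>E. w i j * (norm (x i - x j))\<^sup>2)"
  proof (intro sum.cong refl, clarify)
    fix i j
    show "h i j + h j i = w i j * (norm (x i - x j))\<^sup>2"
      unfolding h_def assms(4)[of j i] power2_norm_eq_inner
      by (simp add: inner_diff_left inner_diff_right inner_commute ring_distribs)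
  qed
  finally show ?thesis
    by (simp add: sum_neighbors_eq_sum_edges[OF assms(1,2)] h_def)
qed

lemma two_mult_le_weighted_squares:
  fixes x y l :: real
  assumes "l > 0"
  shows "2 * x * y \<le> l * x\<^sup>2 + y\<^sup>2 / l"
proof -
  have "0 \<le> (l * x - y)\<^sup>2 / l" using assms by simp
  then show ?thesis using assms by (simp add: power2_eq_square field_simps)
qed

lemma neg_inner_weighted_sum_le:
  fixes v :: "'a::real_inner" and d :: "'i \<Rightarrow> 'a"
  assumes "\<And>j. j \<in> N \<Longrightarrow> 0 \<le> w j \<and> w j \<le> W" "l > 0"
  shows "- 2 * inner v (\<Sum>j\<in>N. w j *\<^sub>R d j)
           \<le> real (card N) * l * (norm v)\<^sup>2 + W\<^sup>2 / l * (\<Sum>j\<in>N. (norm (d j))\<^sup>2)"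
proof -
  have *: "- 2 * w j * inner v (d j) \<le> l * (norm v)\<^sup>2 + W\<^sup>2 / l * (norm (d j))\<^sup>2" if j: "j \<in> N" for j
  proof -
    have "- inner v (d j) \<le> norm v * norm (d j)"
      using Cauchy_Schwarz_ineq2[of v "d j"] by linarith
    then have "2 * w j * (- inner v (d j)) \<le> 2 * w j * (norm v * norm (d j))"
      using assms(1)[OF j] by (intro mult_left_mono) auto
    then have "- 2 * w j * inner v (d j) \<le> 2 * w j * (norm v * norm (d j))"
      by (simp only: mult_minus_right mult_minus_left)
    also have "\<dots> \<le> 2 * W * (norm v * norm (d j))"
      using assms(1)[OF j] by (intro mult_right_mono) auto
    also have "\<dots> = 2 * norm v * (W * norm (d j))"
      by (simp only: mult_ac)
    also have "\<dots> \<le> l * (norm v)\<^sup>2 + (W * norm (d j))\<^sup>2 / l"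
      by (rule two_mult_le_weighted_squares[OF assms(2)])
    finally show ?thesis by (simp add: power_mult_distrib)
  qed
  have "- 2 * inner v (\<Sum>j\<in>N. w j *\<^sub>R d j) = (\<Sum>j\<in>N. - 2 * w j * inner v (d j))"
    by (simp add: inner_sum_right sum_distrib_left mult.assoc)
  also have "\<dots> \<le> (\<Sum>j\<in>N. l * (norm v)\<^sup>2 + W\<^sup>2 / l * (norm (d j))\<^sup>2)"
    using * by (rule sum_mono)
  also have "\<dots> = real (card N) * l * (norm v)\<^sup>2 + W\<^sup>2 / l * (\<Sum>j\<in>N. (norm (d j))\<^sup>2)"
    by (simp add: sum.distrib sum_distrib_left)
  finally show ?thesis .
qed

text \<open>The cross term \<open>2 v \<bullet> e\<close> turns the velocity damping into decay of the position error.\<close>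
definition agent_energy :: "real \<Rightarrow> 'a::real_inner \<Rightarrow> 'a \<Rightarrow> real" where
  "agent_energy k v e = (norm v)\<^sup>2 + 2 * inner v e + k * (norm e)\<^sup>2"

definition agent_energy_rate :: "real \<Rightarrow> 'a::real_inner \<Rightarrow> 'a \<Rightarrow> 'a \<Rightarrow> 'a \<Rightarrow> real" where
  "agent_energy_rate k v e v' e' = 2 * inner v v' + 2 * (inner v' e + inner v e') + 2 * k * inner e e'"

lemma agent_energy_lower_bound:
  assumes "3 \<le> k"
  shows "(norm v)\<^sup>2 / 2 + (norm e)\<^sup>2 \<le> agent_energy k v e"
proof -
  have "- (2 * inner v e) \<le> 2 * norm v * norm e"
    using Cauchy_Schwarz_ineq2[of v e] by linarith
  also have "\<dots> \<le> 1/2 * (norm v)\<^sup>2 + (norm e)\<^sup>2 / (1/2)"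
    by (rule two_mult_le_weighted_squares) simp
  finally show ?thesis
    using assms mult_right_mono[OF assms, of "(norm e)\<^sup>2"] unfolding agent_energy_def by simp
qed

lemma agent_energy_has_derivative:
  assumes "(v has_vector_derivative v') (at t)" "(e has_vector_derivative e') (at t)"
  shows "((\<lambda>s. agent_energy k (v s) (e s)) has_real_derivative
           agent_energy_rate k (v t) (e t) v' e') (at t)"
proof -
  have inner_deriv: "((\<lambda>s. inner (f s) (g s)) has_real_derivative inner (f t) g' + inner f' (g t)) (at t)"
    if "(f has_vector_derivative f') (at t)" "(g has_vector_derivative g') (at t)"
    for f g :: "real \<Rightarrow> 'a" and f' g'
    using bounded_bilinear.has_vector_derivative[OF bounded_bilinear_inner that]
    by (simp add: has_real_derivative_iff_has_vector_derivative)
  show ?thesis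
    unfolding agent_energy_def agent_energy_rate_def power2_norm_eq_inner
    by (rule derivative_eq_intros inner_deriv assms refl)+
       (simp add: inner_commute algebra_simps)
qed

lemma agent_energy_derivative_le:
  fixes v e g :: "'a::real_inner" and d :: "'i \<Rightarrow> 'a"
  assumes "card N \<le> n" and weights: "\<And>j. j \<in> N \<Longrightarrow> 0 \<le> w j \<and> w j \<le> W"
    and "0 < w_lo" "0 < W"
    and residual: "inner g g \<le> inner e g"
    and acc: "acc = - (k *\<^sub>R v) - g - (\<Sum>j\<in>N. w j *\<^sub>R d j)"
  shows "agent_energy_rate k v e acc v
           \<le> - (2 * k - 4 - 2 * real n * W\<^sup>2 / w_lo) * (norm v)\<^sup>2 - 3/2 * (norm g)\<^sup>2
              + w_lo / 2 * (\<Sum>j\<in>N. (norm (d j))\<^sup>2) - 2 * (\<Sum>j\<in>N. w j * inner e (d j))"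
proof -
  define l where "l = 2 * W\<^sup>2 / w_lo"
  define coupling where "coupling = (\<Sum>j\<in>N. w j *\<^sub>R d j)"
  have "l > 0" using assms(3,4) by (simp add: l_def)
  have "- 2 * inner v coupling \<le> real (card N) * l * (norm v)\<^sup>2 + W\<^sup>2 / l * (\<Sum>j\<in>N. (norm (d j))\<^sup>2)"
    unfolding coupling_def by (rule neg_inner_weighted_sum_le[OF weights \<open>l > 0\<close>])
  also have "\<dots> \<le> real n * l * (norm v)\<^sup>2 + w_lo / 2 * (\<Sum>j\<in>N. (norm (d j))\<^sup>2)"
  proof -
    have "real (card N) * l * (norm v)\<^sup>2 \<le> real n * l * (norm v)\<^sup>2"
      using assms(1) \<open>l > 0\<close> by (intro mult_right_mono) auto
    moreover have "W\<^sup>2 / l = w_lo / 2" using assms(3,4) by (simp add: l_def)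
    ultimately show ?thesis by (metis add_right_mono)
  qed
  finally have coupling_bound: "- 2 * inner v coupling \<le> real n * l * (norm v)\<^sup>2 + w_lo / 2 * (\<Sum>j\<in>N. (norm (d j))\<^sup>2)" .
  have "- 2 * inner v g \<le> 2 * norm v * norm g"
    using Cauchy_Schwarz_ineq2[of v g] by linarith
  also have "\<dots> \<le> 2 * (norm v)\<^sup>2 + (norm g)\<^sup>2 / 2"
    using two_mult_le_weighted_squares[of 2 "norm v" "norm g"] by simp
  finally have residual_bound: "- 2 * inner v g \<le> 2 * (norm v)\<^sup>2 + (norm g)\<^sup>2 / 2" .
  have "agent_energy_rate k v e acc v
      = - 2 * (k - 1) * (norm v)\<^sup>2 - 2 * inner v g - 2 * inner v coupling - 2 * inner e g
        - 2 * inner e coupling"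
    unfolding agent_energy_rate_def acc coupling_def[symmetric] power2_norm_eq_inner
    by (simp add: inner_diff_left inner_diff_right inner_commute ring_distribs)
  moreover have "inner e coupling = (\<Sum>j\<in>N. w j * inner e (d j))"
    by (simp add: coupling_def inner_sum_right)
  moreover have "- (2 * k - 4 - 2 * real n * W\<^sup>2 / w_lo) * (norm v)\<^sup>2
      = - 2 * (k - 1) * (norm v)\<^sup>2 + 2 * (norm v)\<^sup>2 + real n * l * (norm v)\<^sup>2"
    by (simp add: l_def ring_distribs)
  moreover have "(norm g)\<^sup>2 \<le> inner e g"
    using residual by (simp add: power2_norm_eq_inner)
  ultimately show ?thesis
    using coupling_bound residual_bound by linarith
qed

lemma closest_point_residual_inner_le:
  assumes "convex S" "closed S" "y \<in> S"
  shows "inner (x - closest_point S x) (x - closest_point S x)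
           \<le> inner (x - y) (x - closest_point S x)"
proof -
  define p where "p = closest_point S x"
  have "inner (x - p) (y - p) \<le> 0"
    unfolding p_def by (rule closest_point_dot[OF assms])
  moreover have "inner (x - y) (x - p) = inner (x - p) (x - p) - inner (x - p) (y - p)"
    by (simp add: inner_diff_left inner_diff_right inner_commute)
  ultimately show ?thesis unfolding p_def by linarith
qed

lemma infdist_Inter_small_if_sum_infdist_small:
  fixes X :: "'i \<Rightarrow> 'a::metric_space set"
  assumes "finite I" "\<And>l. l \<in> I \<Longrightarrow> closed (X l)" "(\<Inter>l\<in>I. X l) \<noteq> {}"
    and "compact K" "\<epsilon> > 0"
  obtains \<mu> where "\<mu> > 0"
    "\<And>x. x \<in> K \<Longrightarrow> (\<Sum>l\<in>I. infdist x (X l)) < \<mu> \<Longrightarrow> infdist x (\<Inter>l\<in>I. X l) < \<epsilon>"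
proof -
  define F where "F x = (\<Sum>l\<in>I. infdist x (X l))" for x
  define far where "far = K \<inter> {x. \<epsilon> \<le> infdist x (\<Inter>l\<in>I. X l)}"
  have "compact far"
    unfolding far_def by (intro compact_Int_closed assms(4) closed_Collect_le continuous_intros)
  show ?thesis
  proof (cases "far = {}")
    case True
    show ?thesis by (rule that[of 1]) (use True in \<open>auto simp: far_def not_le\<close>)
  next
    case False
    moreover have "continuous_on far F"
      unfolding F_def by (intro continuous_intros)
    ultimately obtain xm where xm: "xm \<in> far" "\<And>y. y \<in> far \<Longrightarrow> F xm \<le> F y"
      using continuous_attains_inf[OF \<open>compact far\<close>] by blast
    have "F xm > 0"
    proof (rule ccontr)
      assume "\<not> F xm > 0"
      moreover have "F xm \<ge> 0" unfolding F_def by (simp add: sum_nonneg infdist_nonneg)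
      ultimately have "\<forall>l\<in>I. infdist xm (X l) = 0"
        unfolding F_def using sum_nonneg_eq_0_iff[OF assms(1), of "\<lambda>l. infdist xm (X l)"]
        by (simp add: infdist_nonneg)
      then have "xm \<in> (\<Inter>l\<in>I. X l)"
        using in_closed_iff_infdist_zero[OF assms(2)] assms(3) by blast
      then show False using xm(1) assms(5) by (simp add: far_def)
    qed
    then show ?thesis
      by (rule that) (use xm(2) in \<open>force simp: far_def F_def\<close>)
  qed
qed

lemma spd_mult_vec_cancel:
  assumes "spd A" "A *v x = A *v y"
  shows "x = y"
proof (rule ccontr)
  assume "x \<noteq> y"
  then have "(x - y) \<bullet> (A *v (x - y)) > 0" using assms(1) unfolding spd_def by simp
  moreover have "A *v (x - y) = 0" using assms(2) by (simp add: matrix_vector_mult_diff_distrib)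
  ultimately show False by simp
qed

lemma computed_torque_closed_loop:
  assumes "spd M"
    and "M *v acc + C *v v = C *v v - k *\<^sub>R (M *v v) - M *v g - M *v u"
  shows "acc = - (k *\<^sub>R v) - g - u"
proof (rule spd_mult_vec_cancel[OF assms(1)])
  have "M *v acc = (M *v acc + C *v v) - C *v v" by simp
  also have "\<dots> = - (k *\<^sub>R (M *v v)) - M *v g - M *v u" unfolding assms(2) by simp
  also have "\<dots> = M *v (- (k *\<^sub>R v) - g - u)"
    by (simp add: matrix_vector_mult_diff_distrib matrix_vector_mult_scaleR
        linear_neg[OF matrix_vector_mul_linear])
  finally show "M *v acc = M *v (- (k *\<^sub>R v) - g - u)" .
qed

locale switching_network =
  fixes n :: nat and \<sigma> :: "real \<Rightarrow> (nat \<times> nat) set"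
    and t0 \<tau>d T :: real and tsw :: "nat \<Rightarrow> real"
  assumes graphs: "\<And>t. t \<ge> t0 \<Longrightarrow> undirected_graph_on {1..n} (\<sigma> t)"
    and dwell_pos: "\<tau>d > 0"
    and tsw_0: "tsw 0 = t0"
    and tsw_dwell: "\<And>l. tsw (Suc l) - tsw l \<ge> \<tau>d"
    and \<sigma>_constant: "\<And>l t. tsw l \<le> t \<Longrightarrow> t < tsw (Suc l) \<Longrightarrow> \<sigma> t = \<sigma> (tsw l)"
    and T_pos: "T > 0"
    and jointly_connected: "\<And>t. t \<ge> t0 \<Longrightarrow> graph_connected {1..n} (\<Union>s\<in>{t..<t+T}. \<sigma> s)"
begin

abbreviation "V \<equiv> {1..n}"

lemma edges_subset: "t \<ge> t0 \<Longrightarrow> \<sigma> t \<subseteq> V \<times> V"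
  and edges_sym: "t \<ge> t0 \<Longrightarrow> sym (\<sigma> t)"
  using graphs by (auto simp: undirected_graph_on_def)

lemma edges_finite: "t \<ge> t0 \<Longrightarrow> finite (\<sigma> t)"
  using edges_subset by (rule finite_subset) auto

lemma neighbors_subset: "t \<ge> t0 \<Longrightarrow> neighbors (\<sigma> t) i \<subseteq> V"
  using edges_subset by (auto simp: neighbors_def)

lemma switching_time_ge: "tsw l \<ge> t0 + real l * \<tau>d"
proof (induction l)
  case (Suc l)
  then show ?case using tsw_dwell[of l] by (simp add: algebra_simps)
qed (simp add: tsw_0)

lemma finite_switching_indices: "finite {l. tsw l \<le> b}"
proof (rule finite_subset)
  show "{l. tsw l \<le> b} \<subseteq> {..nat \<lceil>(b - t0) / \<tau>d\<rceil>}"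
  proof
    fix l assume "l \<in> {l. tsw l \<le> b}"
    then have "real l \<le> (b - t0) / \<tau>d"
      using switching_time_ge[of l] dwell_pos by (simp add: field_simps)
    then show "l \<in> {..nat \<lceil>(b - t0) / \<tau>d\<rceil>}" by simp linarith
  qed
qed simp

lemma finite_switching_times: "finite (range tsw \<inter> {..b})"
proof -
  have "range tsw \<inter> {..b} = tsw ` {l. tsw l \<le> b}" by auto
  then show ?thesis using finite_switching_indices by simp
qed

lemma switching_interval_exists:
  assumes "s \<ge> t0"
  obtains l where "tsw l \<le> s" "s < tsw (Suc l)"
proof -
  define l where "l = Max {l. tsw l \<le> s}"
  have "0 \<in> {l. tsw l \<le> s}" using assms tsw_0 by simp
  then have "l \<in> {l. tsw l \<le> s}"
    unfolding l_def using finite_switching_indices by (intro Max_in) auto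
  moreover have "Suc l \<notin> {l. tsw l \<le> s}"
    using Max_ge[OF finite_switching_indices[of s], of "Suc l"] by (auto simp: l_def)
  ultimately show ?thesis using that by simp
qed

lemma dwell_window:
  assumes "s \<ge> t0"
  obtains c where "s - \<tau>d / 2 \<le> c" "c \<le> s" "\<And>\<tau>. c < \<tau> \<Longrightarrow> \<tau> < c + \<tau>d / 2 \<Longrightarrow> \<sigma> \<tau> = \<sigma> s"
proof -
  obtain l where l: "tsw l \<le> s" "s < tsw (Suc l)"
    using switching_interval_exists[OF assms] .
  define c where "c = max (tsw l) (s - \<tau>d / 2)"
  have "\<sigma> \<tau> = \<sigma> s" if "c < \<tau>" "\<tau> < c + \<tau>d / 2" for \<tau>
  proof -
    have "tsw l \<le> \<tau>" "\<tau> < tsw (Suc l)"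
      using that l tsw_dwell[of l] dwell_pos by (auto simp: c_def max_def split: if_splits)
    then show ?thesis using \<sigma>_constant l by metis
  qed
  moreover have "s - \<tau>d / 2 \<le> c" "c \<le> s" using l dwell_pos by (auto simp: c_def)
  ultimately show ?thesis using that by blast
qed

lemma norm_diff_le_of_window_edges:
  fixes f :: "nat \<Rightarrow> 'b::real_normed_vector"
  assumes "t \<ge> t0" "i \<in> V" "j \<in> V" "0 \<le> \<delta>"
    and edges: "\<And>s u v. s \<in> {t..<t + T} \<Longrightarrow> (u, v) \<in> \<sigma> s \<Longrightarrow> norm (f u - f v) \<le> \<delta>"
  shows "norm (f i - f j) \<le> real (n * n) * \<delta>"
proof -
  define R where "R = (\<Union>s\<in>{t..<t + T}. \<sigma> s) \<inter> V \<times> V"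
  have path: "(i, j) \<in> R\<^sup>*"
    using jointly_connected[OF assms(1)] assms(2,3) unfolding graph_connected_def R_def by blast
  have edge: "norm (f u - f v) \<le> \<delta>" if "(u, v) \<in> R" for u v
    using edges that unfolding R_def by blast
  have "finite R" by (simp add: R_def)
  then have "norm (f i - f j) \<le> real (card R) * \<delta>"
    using norm_diff_le_rtrancl[OF _ assms(4) edge path] by simp
  also have "\<dots> \<le> real (n * n) * \<delta>"
  proof (rule mult_right_mono[OF _ assms(4)])
    have "card R \<le> card (V \<times> V)" by (rule card_mono) (auto simp: R_def)
    then have "card R \<le> n * n" by (simp add: card_cartesian_product)
    then show "real (card R) \<le> real (n * n)" by (simp only: of_nat_le_iff)
  qed
  finally show ?thesis .
qed

end

locale closed_loop = switching_network n \<sigma> t0 \<tau>d T tsw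
  for n \<sigma> t0 \<tau>d T tsw +
  fixes X :: "nat \<Rightarrow> 'a::euclidean_space set" and x0 :: 'a
    and a :: "nat \<Rightarrow> nat \<Rightarrow> real \<Rightarrow> real" and a_lo a_hi k :: real
    and q q' q'' :: "nat \<Rightarrow> real \<Rightarrow> 'a"
  assumes X_closed: "\<And>i. i \<in> {1..n} \<Longrightarrow> closed (X i)"
    and X_convex: "\<And>i. i \<in> {1..n} \<Longrightarrow> convex (X i)"
    and x0_in: "\<And>i. i \<in> {1..n} \<Longrightarrow> x0 \<in> X i"
    and a_sym: "\<And>i j t. a i j t = a j i t"
    and a_bounds: "\<And>i j t. i \<in> {1..n} \<Longrightarrow> j \<in> {1..n} \<Longrightarrow> t \<ge> 0 \<Longrightarrow>
                     a_lo \<le> a i j t \<and> a i j t \<le> a_hi"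
    and a_lo_pos: "a_lo > 0"
    and a_hi_pos: "a_hi > 0"
    and gain: "k > 3 + real n * a_hi\<^sup>2 / a_lo"
    and position_deriv: "\<And>i t. i \<in> {1..n} \<Longrightarrow> t \<ge> t0 \<Longrightarrow>
                     (q i has_vector_derivative q' i t) (at t within {t0..})"
    and velocity_cont: "\<And>i. i \<in> {1..n} \<Longrightarrow> continuous_on {t0..} (q' i)"
    and dynamics: "\<And>i t. i \<in> {1..n} \<Longrightarrow> t > t0 \<Longrightarrow> t \<notin> range tsw \<Longrightarrow>
        (q' i has_vector_derivative q'' i t) (at t) \<and>
        q'' i t = - (k *\<^sub>R q' i t) - (q i t - closest_point (X i) (q i t))
                  - (\<Sum>j\<in>neighbors (\<sigma> t) i. a i j t *\<^sub>R (q i t - q j t))"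
begin

abbreviation residual :: "nat \<Rightarrow> real \<Rightarrow> 'a" where
  "residual i t \<equiv> q i t - closest_point (X i) (q i t)"

text \<open>The weights are only controlled on \<open>[0, \<infinity>)\<close>, so all estimates start at \<open>t1\<close>.\<close>
definition t1 :: real where "t1 = max t0 0"

definition lyapunov :: "real \<Rightarrow> real" where
  "lyapunov t = (\<Sum>i\<in>V. agent_energy k (q' i t) (q i t - x0))"

definition dissipation :: "real \<Rightarrow> real" where
  "dissipation t = (\<Sum>i\<in>V. (norm (q' i t))\<^sup>2) + (\<Sum>i\<in>V. (norm (residual i t))\<^sup>2)
     + a_lo / 2 * (\<Sum>(i, j)\<in>\<sigma> t. (norm (q i t - q j t))\<^sup>2)"

lemma gain_gt_3: "k > 3"
proof -
  have "real n * a_hi\<^sup>2 / a_lo \<ge> 0" using a_lo_pos by simp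
  then show ?thesis using gain by linarith
qed

lemma position_has_derivative_at:
  assumes "i \<in> V" "t > t0"
  shows "(q i has_vector_derivative q' i t) (at t)"
proof -
  have "(q i has_vector_derivative q' i t) (at t within {t0<..})"
    by (rule has_vector_derivative_within_subset[OF position_deriv[OF assms(1)]])
      (use assms(2) in auto)
  moreover have "t \<in> {t0<..}" using assms(2) by simp
  ultimately show ?thesis using has_vector_derivative_within_open open_greaterThan by blast
qed

lemma position_continuous: "i \<in> V \<Longrightarrow> continuous_on {t0..} (q i)"
  unfolding continuous_on_eq_continuous_within
  using has_vector_derivative_continuous[OF position_deriv] by simp

definition lyapunov_rate :: "real \<Rightarrow> real" where
  "lyapunov_rate t = (\<Sum>i\<in>V. agent_energy_rate k (q' i t) (q i t - x0) (q'' i t) (q' i t))"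

lemma lyapunov_has_derivative:
  assumes "t > t0" "t \<notin> range tsw"
  shows "(lyapunov has_real_derivative lyapunov_rate t) (at t)"
  unfolding lyapunov_def[abs_def] lyapunov_rate_def
proof (rule DERIV_sum)
  fix i assume i: "i \<in> V"
  have "(q' i has_vector_derivative q'' i t) (at t)"
    using dynamics[OF i assms] by blast
  moreover have "((\<lambda>s. q i s - x0) has_vector_derivative q' i t) (at t)"
    using has_vector_derivative_diff[OF position_has_derivative_at[OF i assms(1)]
        has_vector_derivative_const[of x0]] by simp
  ultimately show "((\<lambda>s. agent_energy k (q' i s) (q i s - x0)) has_real_derivative
      agent_energy_rate k (q' i t) (q i t - x0) (q'' i t) (q' i t)) (at t)"
    by (rule agent_energy_has_derivative)
qed

lemma agent_rate_le:
  assumes i: "i \<in> V" and t: "t > t1" "t \<notin> range tsw"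
  shows "agent_energy_rate k (q' i t) (q i t - x0) (q'' i t) (q' i t)
    \<le> - (2 * k - 4 - 2 * real n * a_hi\<^sup>2 / a_lo) * (norm (q' i t))\<^sup>2
      - 3/2 * (norm (residual i t))\<^sup>2
      + a_lo / 2 * (\<Sum>j\<in>neighbors (\<sigma> t) i. (norm (q i t - q j t))\<^sup>2)
      - 2 * (\<Sum>j\<in>neighbors (\<sigma> t) i. a i j t * inner (q i t - x0) (q i t - q j t))"
proof (rule agent_energy_derivative_le[where w="\<lambda>j. a i j t" and d="\<lambda>j. q i t - q j t"])
  have t': "t > t0" "t \<ge> 0" using t by (auto simp: t1_def)
  then have nbrs: "neighbors (\<sigma> t) i \<subseteq> V" by (intro neighbors_subset) simp
  then show "card (neighbors (\<sigma> t) i) \<le> n" using card_mono[OF _ nbrs] by simp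
  show "0 \<le> a i j t \<and> a i j t \<le> a_hi" if "j \<in> neighbors (\<sigma> t) i" for j
    using a_bounds[OF i _ t'(2), of j] a_lo_pos nbrs that by fastforce
  show "0 < a_lo" "0 < a_hi" by (fact a_lo_pos a_hi_pos)+
  show "inner (residual i t) (residual i t) \<le> inner (q i t - x0) (residual i t)"
    by (rule closest_point_residual_inner_le[OF X_convex[OF i] X_closed[OF i] x0_in[OF i]])
  show "q'' i t = - (k *\<^sub>R q' i t) - residual i t
      - (\<Sum>j\<in>neighbors (\<sigma> t) i. a i j t *\<^sub>R (q i t - q j t))"
    using dynamics[OF i t'(1) t(2)] by blast
qed

lemma lyapunov_rate_le:
  assumes "t > t1" "t \<notin> range tsw"
  shows "lyapunov_rate t \<le> - dissipation t"
proof -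
  have t: "t \<ge> t0" "t \<ge> 0" using assms by (auto simp: t1_def)
  define c where "c = 2 * k - 4 - 2 * real n * a_hi\<^sup>2 / a_lo"
  define velocities where "velocities = (\<Sum>i\<in>V. (norm (q' i t))\<^sup>2)"
  define residuals where "residuals = (\<Sum>i\<in>V. (norm (residual i t))\<^sup>2)"
  define disagreement where "disagreement = (\<Sum>(i, j)\<in>\<sigma> t. (norm (q i t - q j t))\<^sup>2)"
  define weighted where "weighted = (\<Sum>(i, j)\<in>\<sigma> t. a i j t * (norm (q i t - q j t))\<^sup>2)"
  have "c \<ge> 1" using gain a_lo_pos by (simp add: c_def field_simps)
  have "lyapunov_rate t \<le> (\<Sum>i\<in>V. - c * (norm (q' i t))\<^sup>2 - 3/2 * (norm (residual i t))\<^sup>2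
      + a_lo / 2 * (\<Sum>j\<in>neighbors (\<sigma> t) i. (norm (q i t - q j t))\<^sup>2)
      - 2 * (\<Sum>j\<in>neighbors (\<sigma> t) i. a i j t * inner (q i t - x0) (q i t - q j t)))"
    unfolding lyapunov_rate_def c_def by (rule sum_mono) (rule agent_rate_le[OF _ assms])
  also have "\<dots> = - c * velocities - 3/2 * residuals
      + a_lo / 2 * (\<Sum>i\<in>V. \<Sum>j\<in>neighbors (\<sigma> t) i. (norm (q i t - q j t))\<^sup>2)
      - 2 * (\<Sum>i\<in>V. \<Sum>j\<in>neighbors (\<sigma> t) i. a i j t * inner (q i t - x0) (q i t - q j t))"
    by (simp add: velocities_def residuals_def sum.distrib sum_subtractf sum_distrib_left)
  also have "\<dots> = - c * velocities - 3/2 * residuals + a_lo / 2 * disagreement - weighted"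
    unfolding disagreement_def weighted_def
      sum_neighbors_eq_sum_edges[OF edges_subset[OF t(1)] finite_atLeastAtMost]
      laplacian_quadratic_form[where w="\<lambda>i j. a i j t" and x="\<lambda>i. q i t" and c=x0,
        OF edges_subset[OF t(1)] finite_atLeastAtMost edges_sym[OF t(1)] a_sym, symmetric]
    ..
  also have "\<dots> \<le> - dissipation t"
  proof -
    have "a_lo * disagreement \<le> weighted"
      unfolding disagreement_def weighted_def sum_distrib_left
    proof (intro sum_mono, clarify)
      fix i j assume "(i, j) \<in> \<sigma> t"
      then have "a_lo \<le> a i j t" using a_bounds[of i j t] edges_subset[OF t(1)] t(2) by blast
      then show "a_lo * (norm (q i t - q j t))\<^sup>2 \<le> a i j t * (norm (q i t - q j t))\<^sup>2"
        by (rule mult_right_mono) simp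
    qed
    moreover have "velocities \<le> c * velocities"
      using \<open>c \<ge> 1\<close> mult_right_mono[OF \<open>c \<ge> 1\<close>, of velocities]
      by (simp add: velocities_def sum_nonneg)
    moreover have "residuals \<ge> 0" by (simp add: residuals_def sum_nonneg)
    ultimately show ?thesis
      by (simp add: dissipation_def velocities_def residuals_def disagreement_def)
  qed
  finally show ?thesis .
qed

lemma lyapunov_continuous: "continuous_on {t0..} lyapunov"
  unfolding lyapunov_def[abs_def] agent_energy_def
  by (intro continuous_intros position_continuous velocity_cont) auto

lemma dissipation_nonneg: "dissipation t \<ge> 0"
  unfolding dissipation_def using a_lo_pos
  by (intro add_nonneg_nonneg mult_nonneg_nonneg sum_nonneg) auto

lemma lyapunov_decrease:
  assumes "t1 \<le> s" "s \<le> s'"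
    and dissipating: "\<And>\<tau>. s < \<tau> \<Longrightarrow> \<tau> < s' \<Longrightarrow> \<tau> \<notin> range tsw \<Longrightarrow> dissipation \<tau> \<ge> \<alpha>"
  shows "lyapunov s' \<le> lyapunov s - \<alpha> * (s' - s)"
proof -
  define f where "f \<tau> = lyapunov \<tau> + \<alpha> * \<tau>" for \<tau>
  have "f s' \<le> f s"
  proof (rule DERIV_nonpos_imp_decreasing_finite_exceptions[OF finite_switching_times assms(2)])
    have "{s..s'} \<subseteq> {t0..}" using assms(1) by (auto simp: t1_def)
    then show "continuous_on {s..s'} f"
      unfolding f_def by (intro continuous_intros continuous_on_subset[OF lyapunov_continuous])
    fix \<tau> assume \<tau>: "s < \<tau>" "\<tau> < s'" "\<tau> \<notin> range tsw \<inter> {..s'}"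
    then have "\<tau> > t1" "\<tau> \<notin> range tsw" using assms(1) by auto
    moreover from this have "(lyapunov has_real_derivative lyapunov_rate \<tau>) (at \<tau>)"
      by (intro lyapunov_has_derivative) (auto simp: t1_def)
    ultimately have "(f has_real_derivative lyapunov_rate \<tau> + \<alpha>) (at \<tau>)"
      "lyapunov_rate \<tau> + \<alpha> \<le> 0"
      using DERIV_add[OF _ DERIV_cmult[OF DERIV_ident, of \<alpha>]] lyapunov_rate_le[of \<tau>]
        dissipating[OF \<tau>(1,2)]
      by (auto simp: f_def[abs_def])
    then show "\<exists>y. (f has_real_derivative y) (at \<tau>) \<and> y \<le> 0" by blast
  qed
  then show ?thesis by (simp add: f_def algebra_simps)
qed

lemma lyapunov_antimono: "t1 \<le> s \<Longrightarrow> s \<le> s' \<Longrightarrow> lyapunov s' \<le> lyapunov s"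
  using lyapunov_decrease[of s s' 0] dissipation_nonneg by simp

lemma lyapunov_ge:
  assumes "i \<in> V"
  shows "(norm (q' i t))\<^sup>2 / 2 + (norm (q i t - x0))\<^sup>2 \<le> lyapunov t"
proof -
  have bound: "(norm (q' j t))\<^sup>2 / 2 + (norm (q j t - x0))\<^sup>2 \<le> agent_energy k (q' j t) (q j t - x0)"
    for j using gain_gt_3 by (intro agent_energy_lower_bound) simp
  moreover have "0 \<le> (norm (q' j t))\<^sup>2 / 2 + (norm (q j t - x0))\<^sup>2" for j by simp
  ultimately show ?thesis
    unfolding lyapunov_def using assms by (meson order_trans member_le_sum finite_atLeastAtMost)
qed

lemma lyapunov_nonneg: "lyapunov t \<ge> 0"
  unfolding lyapunov_def using gain_gt_3
  by (intro sum_nonneg order_trans[OF _ agent_energy_lower_bound]) auto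

definition radius :: real where
  "radius = sqrt (2 * lyapunov t1) + 1"

lemma radius_pos: "radius > 0"
  unfolding radius_def using lyapunov_nonneg[of t1] by (simp add: add_nonneg_pos)

lemma velocity_bounded: "i \<in> V \<Longrightarrow> t \<ge> t1 \<Longrightarrow> norm (q' i t) \<le> radius"
  and position_bounded: "i \<in> V \<Longrightarrow> t \<ge> t1 \<Longrightarrow> norm (q i t - x0) \<le> radius"
proof -
  assume "i \<in> V" "t \<ge> t1"
  then have energy: "(norm (q' i t))\<^sup>2 / 2 + (norm (q i t - x0))\<^sup>2 \<le> lyapunov t1"
    using lyapunov_ge lyapunov_antimono[of t1 t] by (meson order.refl order_trans)
  then have "(norm (q' i t))\<^sup>2 \<le> 2 * lyapunov t1" "(norm (q i t - x0))\<^sup>2 \<le> 2 * lyapunov t1"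
    using zero_le_power2[of "norm (q' i t)"] zero_le_power2[of "norm (q i t - x0)"]
      lyapunov_nonneg[of t1] by linarith+
  then have "norm (q' i t) \<le> sqrt (2 * lyapunov t1)" "norm (q i t - x0) \<le> sqrt (2 * lyapunov t1)"
    by (simp_all add: real_le_rsqrt)
  then show "norm (q' i t) \<le> radius" "norm (q i t - x0) \<le> radius"
    unfolding radius_def by linarith+
qed

definition acceleration_bound :: real where
  "acceleration_bound = (k + 1 + 2 * real n * a_hi) * radius"

lemma acceleration_bound_pos: "acceleration_bound > 0"
proof -
  have "k + 1 + 2 * real n * a_hi > 0" using gain_gt_3 a_hi_pos by (simp add: add_pos_nonneg)
  then show ?thesis unfolding acceleration_bound_def using radius_pos by simp
qed

lemma coupling_bounded:
  assumes i: "i \<in> V" and t: "t \<ge> t1"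
  shows "norm (\<Sum>j\<in>neighbors (\<sigma> t) i. a i j t *\<^sub>R (q i t - q j t)) \<le> 2 * real n * a_hi * radius"
proof -
  have t': "t \<ge> t0" "t \<ge> 0" using t by (auto simp: t1_def)
  have nbrs: "neighbors (\<sigma> t) i \<subseteq> V" using t' by (intro neighbors_subset) simp
  have "norm (\<Sum>j\<in>neighbors (\<sigma> t) i. a i j t *\<^sub>R (q i t - q j t))
      \<le> (\<Sum>j\<in>neighbors (\<sigma> t) i. norm (a i j t *\<^sub>R (q i t - q j t)))"
    by (rule norm_sum)
  also have "\<dots> \<le> (\<Sum>j\<in>neighbors (\<sigma> t) i. a_hi * (2 * radius))"
  proof (rule sum_mono)
    fix j assume "j \<in> neighbors (\<sigma> t) i"
    then have j: "j \<in> V" using nbrs by blast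
    have "norm (q i t - q j t) \<le> norm (q i t - x0) + norm (q j t - x0)"
      using norm_triangle_ineq4[of "q i t - x0" "q j t - x0"] by simp
    also have "\<dots> \<le> 2 * radius"
      using position_bounded[OF i t] position_bounded[OF j t] by simp
    finally show "norm (a i j t *\<^sub>R (q i t - q j t)) \<le> a_hi * (2 * radius)"
      using a_bounds[OF i j t'(2)] a_lo_pos by (simp add: mult_mono)
  qed
  also have "\<dots> = real (card (neighbors (\<sigma> t) i)) * (a_hi * (2 * radius))" by simp
  also have "\<dots> \<le> real n * (a_hi * (2 * radius))"
    using card_mono[OF _ nbrs] a_hi_pos radius_pos by (intro mult_right_mono) auto
  finally show ?thesis by simp
qed

lemma acceleration_bounded:
  assumes i: "i \<in> V" and t: "t > t1" "t \<notin> range tsw"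
  shows "norm (q'' i t) \<le> acceleration_bound"
proof -
  have t': "t > t0" "t \<ge> t1" using t by (auto simp: t1_def)
  have "norm (residual i t) \<le> norm (q i t - x0)"
    using closest_point_le[OF X_closed[OF i] x0_in[OF i], of "q i t"] by (simp add: dist_norm)
  then have residual: "norm (residual i t) \<le> radius" using position_bounded[OF i t'(2)] by simp
  have damping: "norm (k *\<^sub>R q' i t) \<le> k * radius"
    using velocity_bounded[OF i t'(2)] gain_gt_3 by (simp add: mult_left_mono)
  have "q'' i t = - (k *\<^sub>R q' i t) - residual i t
      - (\<Sum>j\<in>neighbors (\<sigma> t) i. a i j t *\<^sub>R (q i t - q j t))"
    using dynamics[OF i t'(1) t(2)] by blast
  then have "norm (q'' i t) \<le> norm (- (k *\<^sub>R q' i t) - residual i t)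
      + norm (\<Sum>j\<in>neighbors (\<sigma> t) i. a i j t *\<^sub>R (q i t - q j t))"
    by (simp only: norm_triangle_ineq4)
  moreover have "norm (- (k *\<^sub>R q' i t) - residual i t) \<le> norm (k *\<^sub>R q' i t) + norm (residual i t)"
    using norm_triangle_ineq4[of "- (k *\<^sub>R q' i t)" "residual i t"] by (simp only: norm_minus_cancel)
  ultimately show ?thesis
    using coupling_bounded[OF i t'(2)] residual damping
    unfolding acceleration_bound_def by (simp add: algebra_simps)
qed

lemma velocity_lipschitz:
  assumes "i \<in> V" "t1 \<le> s" "s \<le> s'"
  shows "norm (q' i s' - q' i s) \<le> acceleration_bound * (s' - s)"
proof (rule vector_derivative_bound_finite_exceptions[OF finite_switching_times assms(3)])
  have "{s..s'} \<subseteq> {t0..}" using assms by (auto simp: t1_def)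
  then show "continuous_on {s..s'} (q' i)" by (rule continuous_on_subset[OF velocity_cont[OF assms(1)]])
  show "0 \<le> acceleration_bound" using acceleration_bound_pos by simp
  fix \<tau> assume "s < \<tau>" "\<tau> < s'" "\<tau> \<notin> range tsw \<inter> {..s'}"
  then have "\<tau> > t1" "\<tau> > t0" "\<tau> \<notin> range tsw" using assms by (auto simp: t1_def)
  then show "\<exists>g'. (q' i has_vector_derivative g') (at \<tau>) \<and> norm g' \<le> acceleration_bound"
    using dynamics[OF assms(1)] acceleration_bounded[OF assms(1)] by blast
qed

lemma position_lipschitz:
  assumes "i \<in> V" "t0 \<le> s" "s \<le> s'" "0 \<le> \<mu>"
    and "\<And>\<tau>. s < \<tau> \<Longrightarrow> \<tau> < s' \<Longrightarrow> norm (q' i \<tau>) \<le> \<mu>"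
  shows "norm (q i s' - q i s) \<le> \<mu> * (s' - s)"
proof (rule vector_derivative_bound_finite_exceptions[OF finite.emptyI assms(3) _ assms(4)])
  have "{s..s'} \<subseteq> {t0..}" using assms by auto
  then show "continuous_on {s..s'} (q i)" by (rule continuous_on_subset[OF position_continuous[OF assms(1)]])
  fix \<tau> assume \<tau>: "s < \<tau>" "\<tau> < s'"
  then have "(q i has_vector_derivative q' i \<tau>) (at \<tau>)"
    using assms(2) by (intro position_has_derivative_at[OF assms(1)]) simp
  then show "\<exists>g'. (q i has_vector_derivative g') (at \<tau>) \<and> norm g' \<le> \<mu>"
    using assms(5)[OF \<tau>] by blast
qed

lemma dissipation_frequently_small:
  assumes "\<alpha> > 0" "h > 0"
  obtains T0 where "T0 \<ge> t1"
    "\<And>s. s \<ge> T0 \<Longrightarrow> \<exists>\<tau>. s < \<tau> \<and> \<tau> < s + h \<and> \<tau> \<notin> range tsw \<and> dissipation \<tau> < \<alpha>"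
proof -
  define L where "L = Inf (lyapunov ` {t1..})"
  have bdd: "bdd_below (lyapunov ` {t1..})"
    using lyapunov_nonneg by (intro bdd_belowI[where m=0]) auto
  have "\<exists>y\<in>lyapunov ` {t1..}. y < L + \<alpha> * h"
    unfolding L_def using assms by (intro cInf_lessD) auto
  then obtain T0 where T0: "T0 \<ge> t1" "lyapunov T0 < L + \<alpha> * h" by auto
  have "\<exists>\<tau>. s < \<tau> \<and> \<tau> < s + h \<and> \<tau> \<notin> range tsw \<and> dissipation \<tau> < \<alpha>" if "s \<ge> T0" for s
  proof (rule ccontr)
    assume "\<not> ?thesis"
    then have "\<And>\<tau>. s < \<tau> \<Longrightarrow> \<tau> < s + h \<Longrightarrow> \<tau> \<notin> range tsw \<Longrightarrow> dissipation \<tau> \<ge> \<alpha>"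
      by (meson not_le)
    then have "lyapunov (s + h) \<le> lyapunov s - \<alpha> * (s + h - s)"
      using that T0(1) assms(2) by (intro lyapunov_decrease) auto
    moreover have "lyapunov s \<le> lyapunov T0" using T0(1) that by (rule lyapunov_antimono)
    moreover have "L \<le> lyapunov (s + h)"
      unfolding L_def using that T0(1) assms(2) by (intro cInf_lower bdd) auto
    ultimately show False using T0(2) by simp
  qed
  then show ?thesis using that T0(1) by blast
qed

lemma velocity_sq_le_dissipation: "i \<in> V \<Longrightarrow> (norm (q' i t))\<^sup>2 \<le> dissipation t"
  and residual_sq_le_dissipation: "i \<in> V \<Longrightarrow> (norm (residual i t))\<^sup>2 \<le> dissipation t"
proof -
  have nonneg: "(\<Sum>i\<in>V. (norm (q' i t))\<^sup>2) \<ge> 0" "(\<Sum>i\<in>V. (norm (residual i t))\<^sup>2) \<ge> 0"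
    "a_lo / 2 * (\<Sum>(i, j)\<in>\<sigma> t. (norm (q i t - q j t))\<^sup>2) \<ge> 0"
    using a_lo_pos by (auto intro!: sum_nonneg mult_nonneg_nonneg)
  assume "i \<in> V"
  then have "(norm (q' i t))\<^sup>2 \<le> (\<Sum>i\<in>V. (norm (q' i t))\<^sup>2)"
    "(norm (residual i t))\<^sup>2 \<le> (\<Sum>i\<in>V. (norm (residual i t))\<^sup>2)"
    by (auto intro!: member_le_sum)
  then show "(norm (q' i t))\<^sup>2 \<le> dissipation t" "(norm (residual i t))\<^sup>2 \<le> dissipation t"
    using nonneg unfolding dissipation_def by linarith+
qed

lemma edge_sq_le_dissipation:
  assumes "t \<ge> t0" "(u, v) \<in> \<sigma> t"
  shows "a_lo / 2 * (norm (q u t - q v t))\<^sup>2 \<le> dissipation t"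
proof -
  have "(\<lambda>(i, j). (norm (q i t - q j t))\<^sup>2) (u, v) \<le> (\<Sum>(i, j)\<in>\<sigma> t. (norm (q i t - q j t))\<^sup>2)"
    by (rule member_le_sum[OF assms(2)]) (auto intro: edges_finite[OF assms(1)])
  then have "(norm (q u t - q v t))\<^sup>2 \<le> (\<Sum>(i, j)\<in>\<sigma> t. (norm (q i t - q j t))\<^sup>2)"
    by simp
  then have "a_lo / 2 * (norm (q u t - q v t))\<^sup>2 \<le> a_lo / 2 * (\<Sum>(i, j)\<in>\<sigma> t. (norm (q i t - q j t))\<^sup>2)"
    using a_lo_pos by simp
  moreover have "(\<Sum>i\<in>V. (norm (q' i t))\<^sup>2) \<ge> 0" "(\<Sum>i\<in>V. (norm (residual i t))\<^sup>2) \<ge> 0"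
    by (auto intro!: sum_nonneg)
  ultimately show ?thesis unfolding dissipation_def by linarith
qed

lemma frequently_small_if_sq_le_dissipation:
  assumes "\<And>t. (f t)\<^sup>2 \<le> dissipation t" "\<epsilon> > 0" "h > 0"
  shows "\<exists>T0. \<forall>s\<ge>T0. \<exists>\<tau>. s < \<tau> \<and> \<tau> < s + h \<and> \<bar>f \<tau>\<bar> < \<epsilon>"
proof -
  have "\<epsilon>\<^sup>2 > 0" using assms(2) by simp
  then obtain T0 :: real where "T0 \<ge> t1" and
    T0: "\<And>s. s \<ge> T0 \<Longrightarrow> \<exists>\<tau>. s < \<tau> \<and> \<tau> < s + h \<and> \<tau> \<notin> range tsw \<and> dissipation \<tau> < \<epsilon>\<^sup>2"
    using dissipation_frequently_small assms(3) by blast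
  have "\<bar>f \<tau>\<bar> < \<epsilon>" if "dissipation \<tau> < \<epsilon>\<^sup>2" for \<tau>
    using assms(1)[of \<tau>] that assms(2) by (simp add: abs_less_iff power2_less_imp_less)
  then show ?thesis using T0 by meson
qed

lemma velocity_tendsto_zero:
  assumes i: "i \<in> V"
  shows "(q' i \<longlongrightarrow> 0) at_top"
proof (rule tendsto_norm_zero_cancel)
  show "((\<lambda>t. norm (q' i t)) \<longlongrightarrow> 0) at_top"
  proof (rule tendsto_zero_if_lipschitz_and_frequently_small[OF _ acceleration_bound_pos])
    fix s s' assume "t1 \<le> s" "s \<le> s'"
    then show "\<bar>norm (q' i s') - norm (q' i s)\<bar> \<le> acceleration_bound * (s' - s)"
      using norm_triangle_ineq3[of "q' i s'" "q' i s"] velocity_lipschitz[OF i] by fastforce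
  next
    fix \<epsilon> h :: real assume "\<epsilon> > 0" "h > 0"
    then show "\<exists>T0. \<forall>s\<ge>T0. \<exists>\<tau>. s < \<tau> \<and> \<tau> < s + h \<and> \<bar>norm (q' i \<tau>)\<bar> < \<epsilon>"
      by (intro frequently_small_if_sq_le_dissipation velocity_sq_le_dissipation[OF i])
  qed
qed

lemma residual_tendsto_zero:
  assumes i: "i \<in> V"
  shows "((\<lambda>t. infdist (q i t) (X i)) \<longlongrightarrow> 0) at_top"
proof (rule tendsto_zero_if_lipschitz_and_frequently_small[OF _ radius_pos])
  fix s s' assume s: "t1 \<le> s" "s \<le> s'"
  have "norm (q i s' - q i s) \<le> radius * (s' - s)"
    using s radius_pos velocity_bounded[OF i]
    by (intro position_lipschitz[OF i]) (auto simp: t1_def)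
  then show "\<bar>infdist (q i s') (X i) - infdist (q i s) (X i)\<bar> \<le> radius * (s' - s)"
    using infdist_triangle_abs[of "q i s'" "X i" "q i s"] by (simp add: dist_norm)
next
  have "infdist (q i t) (X i) \<le> norm (residual i t)" for t
    using infdist_le[OF closest_point_in_set[OF X_closed[OF i]]] x0_in[OF i]
    by (auto simp: dist_norm)
  then have "(infdist (q i t) (X i))\<^sup>2 \<le> dissipation t" for t
    using residual_sq_le_dissipation[OF i, of t] infdist_nonneg
    by (meson order_trans power_mono)
  then show "\<exists>T0. \<forall>s\<ge>T0. \<exists>\<tau>. s < \<tau> \<and> \<tau> < s + h \<and> \<bar>infdist (q i \<tau>) (X i)\<bar> < \<epsilon>"
    if "\<epsilon> > 0" "h > 0" for \<epsilon> h
    using that by (intro frequently_small_if_sq_le_dissipation)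
qed

lemma positions_eventually_slow:
  assumes "\<mu> > 0"
  obtains T1 where "T1 \<ge> t1"
    "\<And>i x y. i \<in> V \<Longrightarrow> T1 \<le> x \<Longrightarrow> T1 \<le> y \<Longrightarrow> norm (q i x - q i y) \<le> \<mu> * \<bar>x - y\<bar>"
proof -
  have "\<forall>\<^sub>F t in at_top. norm (q' i t) < \<mu>" if "i \<in> V" for i
    using tendstoD[OF velocity_tendsto_zero[OF that] assms] by simp
  then have "\<forall>\<^sub>F t in at_top. \<forall>i\<in>V. norm (q' i t) < \<mu>"
    by (intro eventually_ball_finite) auto
  then obtain T where T: "\<And>t i. t \<ge> T \<Longrightarrow> i \<in> V \<Longrightarrow> norm (q' i t) < \<mu>"
    unfolding eventually_at_top_linorder by blast
  have slow: "norm (q i y - q i x) \<le> \<mu> * (y - x)"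
    if "i \<in> V" "max T t1 \<le> x" "x \<le> y" for i x y
    using that assms T[of _ i] by (intro position_lipschitz) (auto simp: t1_def less_imp_le)
  have "norm (q i x - q i y) \<le> \<mu> * \<bar>x - y\<bar>"
    if "i \<in> V" "max T t1 \<le> x" "max T t1 \<le> y" for i x y
  proof (cases "x \<le> y")
    case True
    then show ?thesis using slow[of i x y] that by (simp add: norm_minus_commute)
  next
    case False
    then show ?thesis using slow[of i y x] that by simp
  qed
  then show ?thesis using that[of "max T t1"] by simp
qed

text \<open>An edge active at time \<open>s\<close> stays active on a dwell window next to \<open>s\<close>, which must
  contain a time of small dissipation.\<close>
lemma active_edges_eventually_close:
  assumes "\<delta> > 0"
  obtains T0 where "T0 \<ge> t1"
    "\<And>s u v. s \<ge> T0 \<Longrightarrow> (u, v) \<in> \<sigma> s \<Longrightarrow>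
       \<exists>\<tau>. s - \<tau>d / 2 < \<tau> \<and> \<tau> < s + \<tau>d / 2 \<and> norm (q u \<tau> - q v \<tau>) < \<delta>"
proof -
  have "a_lo / 2 * \<delta>\<^sup>2 > 0" "\<tau>d / 2 > 0" using assms a_lo_pos dwell_pos by simp_all
  then obtain T0 :: real where T0: "T0 \<ge> t1" "\<And>s. s \<ge> T0 \<Longrightarrow>
      \<exists>\<tau>. s < \<tau> \<and> \<tau> < s + \<tau>d / 2 \<and> \<tau> \<notin> range tsw \<and> dissipation \<tau> < a_lo / 2 * \<delta>\<^sup>2"
    using dissipation_frequently_small by blast
  have "\<exists>\<tau>. s - \<tau>d / 2 < \<tau> \<and> \<tau> < s + \<tau>d / 2 \<and> norm (q u \<tau> - q v \<tau>) < \<delta>"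
    if s: "s \<ge> T0 + \<tau>d / 2" and uv: "(u, v) \<in> \<sigma> s" for s u v
  proof -
    have "s \<ge> t0" using s T0(1) dwell_pos by (simp add: t1_def)
    then obtain c :: real where c: "s - \<tau>d / 2 \<le> c" "c \<le> s"
      "\<And>\<tau>. c < \<tau> \<Longrightarrow> \<tau> < c + \<tau>d / 2 \<Longrightarrow> \<sigma> \<tau> = \<sigma> s"
      using dwell_window by blast
    obtain \<tau> where \<tau>: "c < \<tau>" "\<tau> < c + \<tau>d / 2" "dissipation \<tau> < a_lo / 2 * \<delta>\<^sup>2"
      using T0(2)[of c] c(1) s by auto
    have "\<tau> \<ge> t0" using \<tau>(1) c(1) s T0(1) by (simp add: t1_def)
    moreover have "(u, v) \<in> \<sigma> \<tau>" using uv c(3)[OF \<tau>(1,2)] by simp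
    ultimately have "a_lo / 2 * (norm (q u \<tau> - q v \<tau>))\<^sup>2 < a_lo / 2 * \<delta>\<^sup>2"
      using edge_sq_le_dissipation \<tau>(3) by fastforce
    then have "norm (q u \<tau> - q v \<tau>) < \<delta>"
      using a_lo_pos assms by (simp add: power2_less_imp_less)
    then show ?thesis using \<tau>(1,2) c(1,2) by (intro exI[of _ \<tau>]) auto
  qed
  then show ?thesis using that[of "T0 + \<tau>d / 2"] T0(1) dwell_pos by simp
qed

lemma edge_disagreement_eventually_small:
  assumes "\<delta> > 0"
  shows "\<forall>\<^sub>F t in at_top. \<forall>s\<in>{t..<t + T}. \<forall>(u, v)\<in>\<sigma> s. norm (q u t - q v t) \<le> \<delta>"
proof -
  define \<mu> where "\<mu> = \<delta> / (4 * (T + \<tau>d))"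
  have "\<mu> > 0" using assms T_pos dwell_pos by (simp add: \<mu>_def)
  then obtain T1 :: real where "T1 \<ge> t1" and slow:
    "\<And>i x y. i \<in> V \<Longrightarrow> T1 \<le> x \<Longrightarrow> T1 \<le> y \<Longrightarrow> norm (q i x - q i y) \<le> \<mu> * \<bar>x - y\<bar>"
    using positions_eventually_slow by blast
  have "\<delta> / 2 > 0" using assms by simp
  then obtain T0 :: real where T0: "T0 \<ge> t1" "\<And>s u v. s \<ge> T0 \<Longrightarrow> (u, v) \<in> \<sigma> s \<Longrightarrow>
      \<exists>\<tau>. s - \<tau>d / 2 < \<tau> \<and> \<tau> < s + \<tau>d / 2 \<and> norm (q u \<tau> - q v \<tau>) < \<delta> / 2"
    using active_edges_eventually_close[OF \<open>\<delta> / 2 > 0\<close>] by blast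
  have "norm (q u t - q v t) \<le> \<delta>"
    if t: "t \<ge> max T0 T1 + \<tau>d / 2" and s: "t \<le> s" "s < t + T" and uv: "(u, v) \<in> \<sigma> s" for t s u v
  proof -
    have "s \<ge> T0" using t s dwell_pos by simp
    then obtain \<tau> where \<tau>: "s - \<tau>d / 2 < \<tau>" "\<tau> < s + \<tau>d / 2" "norm (q u \<tau> - q v \<tau>) < \<delta> / 2"
      using T0(2)[OF _ uv] by blast
    have "s \<ge> t0" using \<open>s \<ge> T0\<close> T0(1) by (simp add: t1_def)
    then have uv': "u \<in> V" "v \<in> V" using edges_subset[OF \<open>s \<ge> t0\<close>] uv by auto
    have "\<mu> * \<bar>t - \<tau>\<bar> \<le> \<delta> / 4"
    proof -
      have "\<bar>t - \<tau>\<bar> \<le> T + \<tau>d" using \<tau>(1,2) s dwell_pos by (simp add: abs_le_iff)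
      then have "\<mu> * \<bar>t - \<tau>\<bar> \<le> \<mu> * (T + \<tau>d)" using \<open>\<mu> > 0\<close> by (simp add: mult_left_mono)
      also have "\<dots> = \<delta> / 4"
        using T_pos dwell_pos unfolding \<mu>_def by (simp add: field_simps)
      finally show ?thesis .
    qed
    moreover have "T1 \<le> t" "T1 \<le> \<tau>" using t \<tau>(1) s dwell_pos by auto
    ultimately have drift: "norm (q u t - q u \<tau>) \<le> \<delta> / 4" "norm (q v t - q v \<tau>) \<le> \<delta> / 4"
      using slow[OF uv'(1), of t \<tau>] slow[OF uv'(2), of t \<tau>] by linarith+
    have "q u t - q v t = (q u \<tau> - q v \<tau>) + ((q u t - q u \<tau>) - (q v t - q v \<tau>))"
      by (simp add: algebra_simps)
    then have "norm (q u t - q v t)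
        \<le> norm (q u \<tau> - q v \<tau>) + norm ((q u t - q u \<tau>) - (q v t - q v \<tau>))"
      by (simp only: norm_triangle_ineq)
    then show ?thesis
      using \<tau>(3) drift norm_triangle_ineq4[of "q u t - q u \<tau>" "q v t - q v \<tau>"] by linarith
  qed
  then show ?thesis
    unfolding eventually_at_top_linorder by (intro exI[of _ "max T0 T1 + \<tau>d / 2"]) auto
qed

lemma consensus:
  assumes "i \<in> V" "j \<in> V"
  shows "((\<lambda>t. q i t - q j t) \<longlongrightarrow> 0) at_top"
proof (rule tendstoI)
  fix \<epsilon> :: real assume "\<epsilon> > 0"
  define \<delta> where "\<delta> = \<epsilon> / (real (n * n) + 1)"
  have "\<delta> > 0" using \<open>\<epsilon> > 0\<close> by (simp add: \<delta>_def add_nonneg_pos)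
  have "real (n * n) * \<delta> = \<epsilon> * (real (n * n) / (real (n * n) + 1))"
    by (simp add: \<delta>_def)
  also have "\<dots> < \<epsilon> * 1"
  proof (rule mult_strict_left_mono[OF _ \<open>\<epsilon> > 0\<close>])
    have "real (n * n) + 1 > 0" by (simp add: add_nonneg_pos)
    then show "real (n * n) / (real (n * n) + 1) < 1" by (simp add: divide_less_eq)
  qed
  finally have "real (n * n) * \<delta> < \<epsilon>" by simp
  have close: "norm (q i t - q j t) < \<epsilon>"
    if "t \<ge> t0" and "\<forall>s\<in>{t..<t + T}. \<forall>(u, v)\<in>\<sigma> s. norm (q u t - q v t) \<le> \<delta>" for t
    using norm_diff_le_of_window_edges[of t i j \<delta> "\<lambda>i. q i t"] that assms \<open>\<delta> > 0\<close>
      \<open>real (n * n) * \<delta> < \<epsilon>\<close> by fastforce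
  have "\<forall>\<^sub>F t in at_top. t \<ge> t0" by (rule eventually_ge_at_top)
  moreover note edge_disagreement_eventually_small[OF \<open>\<delta> > 0\<close>]
  ultimately show "\<forall>\<^sub>F t in at_top. dist (q i t - q j t) 0 < \<epsilon>"
  proof eventually_elim
    case (elim t)
    then show ?case using close by simp
  qed
qed

lemma distance_to_common_set_tendsto_zero:
  assumes "i \<in> V"
  shows "((\<lambda>t. infdist (q i t) (\<Inter>l\<in>V. X l)) \<longlongrightarrow> 0) at_top"
proof (rule tendstoI)
  fix \<epsilon> :: real assume "\<epsilon> > 0"
  have "x0 \<in> (\<Inter>l\<in>V. X l)" using x0_in by simp
  then have "(\<Inter>l\<in>V. X l) \<noteq> {}" by blast
  obtain \<mu> where "\<mu> > 0" and \<mu>: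
    "\<And>x. x \<in> cball x0 radius \<Longrightarrow> (\<Sum>l\<in>V. infdist x (X l)) < \<mu> \<Longrightarrow>
       infdist x (\<Inter>l\<in>V. X l) < \<epsilon>"
    using infdist_Inter_small_if_sum_infdist_small[OF finite_atLeastAtMost X_closed
        \<open>(\<Inter>l\<in>V. X l) \<noteq> {}\<close> compact_cball \<open>\<epsilon> > 0\<close>] by blast
  have "((\<lambda>t. \<Sum>l\<in>V. infdist (q i t) (X l)) \<longlongrightarrow> 0) at_top"
  proof (rule tendsto_null_sum)
    fix l assume l: "l \<in> V"
    show "((\<lambda>t. infdist (q i t) (X l)) \<longlongrightarrow> 0) at_top"
    proof (rule Lim_null_comparison)
      have "norm (infdist (q i t) (X l)) \<le> infdist (q l t) (X l) + norm (q i t - q l t)" for t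
        using infdist_triangle[of "q i t" "X l" "q l t"] by (simp add: dist_norm infdist_nonneg)
      then show "\<forall>\<^sub>F t in at_top. norm (infdist (q i t) (X l))
          \<le> infdist (q l t) (X l) + norm (q i t - q l t)"
        by (intro always_eventually allI)
      show "((\<lambda>t. infdist (q l t) (X l) + norm (q i t - q l t)) \<longlongrightarrow> 0) at_top"
        using residual_tendsto_zero[OF l] tendsto_norm_zero[OF consensus[OF assms l]]
        by (rule tendsto_add_zero)
    qed
  qed
  then have "\<forall>\<^sub>F t in at_top. (\<Sum>l\<in>V. infdist (q i t) (X l)) < \<mu>"
    using \<open>\<mu> > 0\<close> by (rule order_tendstoD)
  moreover have "\<forall>\<^sub>F t in at_top. t \<ge> t1" by (rule eventually_ge_at_top)
  ultimately show "\<forall>\<^sub>F t in at_top. dist (infdist (q i t) (\<Inter>l\<in>V. X l)) 0 < \<epsilon>"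
  proof eventually_elim
    case (elim t)
    then have "q i t \<in> cball x0 radius"
      using position_bounded[OF assms] by (simp add: dist_norm norm_minus_commute)
    then show ?case using \<mu> elim(1) by (simp add: infdist_nonneg)
  qed
qed

end

theorem theorem2:
  fixes n :: nat
    and M :: "nat \<Rightarrow> real^'m \<Rightarrow> real^'m^'m"
    and C :: "nat \<Rightarrow> real^'m \<Rightarrow> real^'m \<Rightarrow> real^'m^'m"
    and X :: "nat \<Rightarrow> (real^'m) set"
    and P :: "(nat \<times> nat) set set"
    and \<sigma> :: "real \<Rightarrow> (nat \<times> nat) set"
    and t0 \<tau>d T a_lo a_hi :: real
    and tsw :: "nat \<Rightarrow> real"
    and a :: "nat \<Rightarrow> nat \<Rightarrow> real \<Rightarrow> real"
  assumes M_spd: "\<And>i x. i \<in> {1..n} \<Longrightarrow> spd (M i x)"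
    and X_closed: "\<And>i. i \<in> {1..n} \<Longrightarrow> closed (X i)"
    and X_convex: "\<And>i. i \<in> {1..n} \<Longrightarrow> convex (X i)"
    and X0_ne: "(\<Inter>i\<in>{1..n}. X i) \<noteq> {}"
    and X0_bdd: "bounded (\<Inter>i\<in>{1..n}. X i)"
    and P_fin: "finite P"
    and P_graphs: "\<And>G. G \<in> P \<Longrightarrow> undirected_graph_on {1..n} G"
    and \<sigma>_in: "\<And>t. t \<ge> t0 \<Longrightarrow> \<sigma> t \<in> P"
    and \<tau>d_pos: "\<tau>d > 0"
    and tsw_0: "tsw 0 = t0"
    and tsw_dwell: "\<And>l. tsw (Suc l) - tsw l \<ge> \<tau>d"
    and \<sigma>_pc: "\<And>l t. tsw l \<le> t \<Longrightarrow> t < tsw (Suc l) \<Longrightarrow> \<sigma> t = \<sigma> (tsw l)"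
    and a_sym: "\<And>i j t. a i j t = a j i t"
    and a_cont: "\<And>i j. i \<in> {1..n} \<Longrightarrow> j \<in> {1..n} \<Longrightarrow> continuous_on {0..} (a i j)"
    and a_pos: "a_lo > 0" "a_hi > 0"
    and a_bounds: "\<And>i j t. i \<in> {1..n} \<Longrightarrow> j \<in> {1..n} \<Longrightarrow> t \<ge> 0 \<Longrightarrow>
                     a_lo \<le> a i j t \<and> a i j t \<le> a_hi"
    and T_pos: "T > 0"
    and jointly_connected: "\<And>t. t \<ge> t0 \<Longrightarrow>
                     graph_connected {1..n} (\<Union>s\<in>{t..<t+T}. \<sigma> s)"
  shows "\<exists>k0>0. \<forall>k>k0. \<forall>(q :: nat \<Rightarrow> real \<Rightarrow> real^'m) q' q''.
     ((\<forall>i\<in>{1..n}. \<forall>t\<ge>t0. (q i has_vector_derivative q' i t) (at t within {t0..}))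
      \<and> (\<forall>i\<in>{1..n}. continuous_on {t0..} (q' i))
      \<and> (\<forall>i\<in>{1..n}. \<forall>t>t0. t \<notin> range tsw \<longrightarrow>
            (q' i has_vector_derivative q'' i t) (at t)
            \<and> M i (q i t) *v q'' i t + C i (q i t) (q' i t) *v q' i t =
                C i (q i t) (q' i t) *v q' i t
                - k *\<^sub>R (M i (q i t) *v q' i t)
                - M i (q i t) *v (q i t - closest_point (X i) (q i t))
                - M i (q i t) *v (\<Sum>j\<in>neighbors (\<sigma> t) i. a i j t *\<^sub>R (q i t - q j t))))
     \<longrightarrow> (\<forall>i\<in>{1..n}. ((\<lambda>t. infdist (q i t) (\<Inter>l\<in>{1..n}. X l)) \<longlongrightarrow> 0) at_top)
       \<and> (\<forall>i\<in>{1..n}. \<forall>j\<in>{1..n}. ((\<lambda>t. q i t - q j t) \<longlongrightarrow> 0) at_top)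
       \<and> (\<forall>i\<in>{1..n}. (q' i \<longlongrightarrow> 0) at_top)"
proof -
  obtain x0 where x0: "x0 \<in> (\<Inter>i\<in>{1..n}. X i)" using X0_ne by blast
  interpret switching_network n \<sigma> t0 \<tau>d T tsw
    using P_graphs \<sigma>_in \<tau>d_pos tsw_0 tsw_dwell \<sigma>_pc T_pos jointly_connected
    by unfold_locales blast+
  define k0 where "k0 = 3 + real n * a_hi\<^sup>2 / a_lo"
  have "k0 > 0" using a_pos by (simp add: k0_def add_pos_nonneg)
  show ?thesis
  proof (intro exI[of _ k0] conjI[OF \<open>k0 > 0\<close>] allI impI, goal_cases)
    case (1 k q q' q'')
    then have dynamics: "(q' i has_vector_derivative q'' i t) (at t) \<and>
        q'' i t = - (k *\<^sub>R q' i t) - (q i t - closest_point (X i) (q i t))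
                  - (\<Sum>j\<in>neighbors (\<sigma> t) i. a i j t *\<^sub>R (q i t - q j t))"
      if "i \<in> {1..n}" "t > t0" "t \<notin> range tsw" for i t
      using that computed_torque_closed_loop[OF M_spd] by blast
    interpret closed_loop n \<sigma> t0 \<tau>d T tsw X x0 a a_lo a_hi k q q' q''
      using X_closed X_convex x0 a_sym a_bounds a_pos 1 dynamics
      by unfold_locales (auto simp: k0_def)
    show ?case
      using distance_to_common_set_tendsto_zero consensus velocity_tendsto_zero by blast
  qed
qed

end
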